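(* Let $n=2r+1$, let $\pi$ be an irreducible generic unitarizable representation of $G_n$, and let $W_{v_m}$ be its normalized Howe vector of level $m$. Let $$g=\begin{pmatrix}0&a\\ b\omega_r&0\end{pmatrix}\begin{pmatrix}u_r&0&u_r\omega_ra'u\\0&1&0\\0&0&I_r\end{pmatrix},$$ where $a=\mathrm{diag}(a_1,\dots,a_{r+1})\in A_{r+1}$, $a'=\mathrm{diag}(a'_1,\dots,a'_r)\in A_r$, $b=\mathrm{diag}(b_1,\dots,b_r)\in A_r$, $u_r\in N_r$, $u\in N_r$ (the first factor has block sizes with $a$ in the upper right $(r+1)\times(r+1)$ position and $b\omega_r$ in the lower left $r\times r$ position). If $W_{v_m}(g)\ne0$, then $a_i/a_{i+1}\in1+\mathfrak p^m$ for $i=1,\dots,r$, the matrix $\begin{pmatrix}I_r&0&\omega_ra'u\\0&1&0\\0&0&I_r\end{pmatrix}$ lies in $J_{n,m}$, and $$W_{v_m}(g)=W_{v_m}\left(\begin{pmatrix}0&a\\ b\omega_r&0\end{pmatrix}\begin{pmatrix}u_r&0&0\\0&1&0\\0&0&I_r\end{pmatrix}\right).$$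
   Context: $F$ is a $p$-adic field, $\mathcal O$ its ring of integers, $\mathfrak p$ its maximal ideal, $\varpi$ a uniformizer; $\psi$ is a nontrivial additive character with conductor $\mathcal O$, extended to $N_n$ (upper triangular unipotent) by $\psi(u)=\psi(\sum u_{i,i+1})$. $A_k$ denotes diagonal matrices in $G_k=GL_k(F)$, $N_k$ upper triangular unipotent matrices, $\omega_k$ the $k\times k$ antidiagonal permutation matrix. Howe vectors: $K_n^m=I_n+M_n(\mathfrak p^m)$, $d=\mathrm{diag}(1,\varpi^2,\dots,\varpi^{2n-2})$, $J_{n,m}=d^mK_n^md^{-m}$, $N_{n,m}=N_n\cap J_{n,m}$, $\bar B_{n,m}=\bar B_n\cap J_{n,m}$ ($\bar B_n$ lower triangular Borel); $J_{n,m}=\bar B_{n,m}N_{n,m}$ and for $j=\bar b_jn_j$ put $\psi_m(j)=\psi(n_j)$. The normalized Howe vector of level $m$ is the unique (for $m$ large) $W_{v_m}\in\mathcal W(\pi,\psi)$ with $W_{v_m}(gj)=\psi_m(j)W_{v_m}(g)$ for all $g\in G_n$, $j\in J_{n,m}$, and $W_{v_m}(I_n)=1$. *)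

theory Defs
  imports Complex_Main "Jordan_Normal_Form.Matrix" "Jordan_Normal_Form.Determinant"
begin

text \<open>v is the normalized valuation on F (only its values at nonzero elements matter).
  pideal v k is the fractional ideal p^k = {x. x = 0 or v x >= k}; O = p^0.\<close>

definition pideal :: "('a::field \<Rightarrow> int) \<Rightarrow> int \<Rightarrow> 'a set" where
  "pideal v k = {x. x = 0 \<or> k \<le> v x}"

definition padic_field :: "('a::field \<Rightarrow> int) \<Rightarrow> bool" where
  "padic_field v \<longleftrightarrow>
     (\<forall>x y. x \<noteq> 0 \<longrightarrow> y \<noteq> 0 \<longrightarrow> v (x * y) = v x + v y) \<and>
     (\<forall>x y. x \<noteq> 0 \<longrightarrow> y \<noteq> 0 \<longrightarrow> x + y \<noteq> 0 \<longrightarrow> min (v x) (v y) \<le> v (x + y)) \<and>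
     (\<exists>w. w \<noteq> 0 \<and> v w = 1) \<and>
     (\<exists>S. finite S \<and> (\<forall>x\<in>pideal v 0. \<exists>s\<in>S. x - s \<in> pideal v 1)) \<and>
     (\<forall>X::nat \<Rightarrow> 'a. (\<forall>k. \<exists>N. \<forall>i\<ge>N. \<forall>j\<ge>N. X i - X j \<in> pideal v k) \<longrightarrow>
         (\<exists>L. \<forall>k. \<exists>N. \<forall>i\<ge>N. X i - L \<in> pideal v k)) \<and>
     (\<forall>n::nat. n > 0 \<longrightarrow> (of_nat n :: 'a) \<noteq> 0)"

definition add_char_conductor_O :: "('a::field \<Rightarrow> int) \<Rightarrow> ('a \<Rightarrow> complex) \<Rightarrow> bool" where
  "add_char_conductor_O v \<psi> \<longleftrightarrow>
     (\<forall>x y. \<psi> (x + y) = \<psi> x * \<psi> y) \<and> (\<forall>x. cmod (\<psi> x) = 1) \<and>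
     (\<forall>x\<in>pideal v 0. \<psi> x = 1) \<and> (\<exists>x\<in>pideal v (-1). \<psi> x \<noteq> 1)"

section \<open>Matrix groups (0-based indices)\<close>

definition GL :: "nat \<Rightarrow> 'a::field mat set" where
  "GL n = {g \<in> carrier_mat n n. det g \<noteq> 0}"

definition upper_uni :: "nat \<Rightarrow> 'a::field mat set" where
  "upper_uni n = {u \<in> carrier_mat n n. (\<forall>i<n. u $$ (i,i) = 1) \<and> (\<forall>i<n. \<forall>j<i. u $$ (i,j) = 0)}"

definition lower_borel :: "nat \<Rightarrow> 'a::field mat set" where
  "lower_borel n = {b \<in> carrier_mat n n. (\<forall>i<n. b $$ (i,i) \<noteq> 0) \<and> (\<forall>j<n. \<forall>i<j. b $$ (i,j) = 0)}"

definition diagm :: "nat \<Rightarrow> (nat \<Rightarrow> 'a::field) \<Rightarrow> 'a mat" where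
  "diagm k f = mat k k (\<lambda>(i,j). if i = j then f i else 0)"

definition diag_torus :: "nat \<Rightarrow> 'a::field mat set" where
  "diag_torus k = {diagm k f | f. \<forall>i<k. f i \<noteq> 0}"

definition omega :: "nat \<Rightarrow> 'a::field mat" where
  "omega k = mat k k (\<lambda>(i,j). if i + j = k - 1 then 1 else 0)"

definition psiN :: "('a::field \<Rightarrow> complex) \<Rightarrow> nat \<Rightarrow> 'a mat \<Rightarrow> complex" where
  "psiN \<psi> n u = \<psi> (\<Sum>i<n - 1. u $$ (i, Suc i))"

definition Kcong :: "('a::field \<Rightarrow> int) \<Rightarrow> nat \<Rightarrow> nat \<Rightarrow> 'a mat set" where
  "Kcong v n m = {k \<in> carrier_mat n n.
      \<forall>i<n. \<forall>j<n. k $$ (i,j) - (if i = j then 1 else 0) \<in> pideal v (int m)}"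

text \<open>J_{n,m} = d^m K_n^m d^{-m}, d = diag(1, w^2, ..., w^{2n-2}), w a uniformizer.\<close>
definition Jgrp :: "('a::field \<Rightarrow> int) \<Rightarrow> 'a \<Rightarrow> nat \<Rightarrow> nat \<Rightarrow> 'a mat set" where
  "Jgrp v w n m = {diagm n (\<lambda>i. w ^ (2 * i * m)) * k * diagm n (\<lambda>i. inverse (w ^ (2 * i * m)))
                   | k. k \<in> Kcong v n m}"

definition Nm :: "('a::field \<Rightarrow> int) \<Rightarrow> 'a \<Rightarrow> nat \<Rightarrow> nat \<Rightarrow> 'a mat set" where
  "Nm v w n m = upper_uni n \<inter> Jgrp v w n m"

definition Bbarm :: "('a::field \<Rightarrow> int) \<Rightarrow> 'a \<Rightarrow> nat \<Rightarrow> nat \<Rightarrow> 'a mat set" where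
  "Bbarm v w n m = lower_borel n \<inter> Jgrp v w n m"

section \<open>Irreducible generic unitarizable representations, via their Whittaker models\<close>

text \<open>A space of functions GL_n(F) -> C (extended by 0 off GL_n).\<close>
definition cspace :: "('a mat \<Rightarrow> complex) set \<Rightarrow> bool" where
  "cspace U \<longleftrightarrow> (\<lambda>_. 0) \<in> U \<and> (\<forall>W1\<in>U. \<forall>W2\<in>U. (\<lambda>g. W1 g + W2 g) \<in> U) \<and>
                 (\<forall>c. \<forall>W\<in>U. (\<lambda>g. c * W g) \<in> U)"

definition rtrans_inv :: "nat \<Rightarrow> ('a::field mat \<Rightarrow> complex) set \<Rightarrow> bool" where
  "rtrans_inv n U \<longleftrightarrow> (\<forall>W\<in>U. \<forall>h\<in>GL n. (\<lambda>g. W (g * h)) \<in> U)"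

text \<open>V is the Whittaker model W(pi,psi) of an irreducible smooth generic representation pi of GL_n(F)
  (realised by right translation).\<close>
definition irred_whittaker_model ::
  "('a::field \<Rightarrow> int) \<Rightarrow> ('a \<Rightarrow> complex) \<Rightarrow> nat \<Rightarrow> ('a mat \<Rightarrow> complex) set \<Rightarrow> bool" where
  "irred_whittaker_model v \<psi> n V \<longleftrightarrow>
     cspace V \<and> rtrans_inv n V \<and>
     (\<forall>W\<in>V. \<forall>g. g \<notin> GL n \<longrightarrow> W g = 0) \<and>
     (\<forall>W\<in>V. \<forall>u\<in>upper_uni n. \<forall>g\<in>GL n. W (u * g) = psiN \<psi> n u * W g) \<and>
     (\<forall>W\<in>V. \<exists>m. \<forall>g\<in>GL n. \<forall>k\<in>Kcong v n m. W (g * k) = W g) \<and>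
     V \<noteq> {\<lambda>_. 0} \<and>
     (\<forall>U. U \<subseteq> V \<longrightarrow> cspace U \<longrightarrow> rtrans_inv n U \<longrightarrow> U \<noteq> {\<lambda>_. 0} \<longrightarrow> U = V)"

definition unitarizable :: "nat \<Rightarrow> ('a::field mat \<Rightarrow> complex) set \<Rightarrow> bool" where
  "unitarizable n V \<longleftrightarrow> (\<exists>B :: ('a mat \<Rightarrow> complex) \<Rightarrow> ('a mat \<Rightarrow> complex) \<Rightarrow> complex.
     (\<forall>W1\<in>V. \<forall>W2\<in>V. \<forall>W3\<in>V. B (\<lambda>g. W1 g + W2 g) W3 = B W1 W3 + B W2 W3) \<and>
     (\<forall>c. \<forall>W1\<in>V. \<forall>W2\<in>V. B (\<lambda>g. c * W1 g) W2 = c * B W1 W2) \<and>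
     (\<forall>W1\<in>V. \<forall>W2\<in>V. B W2 W1 = cnj (B W1 W2)) \<and>
     (\<forall>W\<in>V. W \<noteq> (\<lambda>_. 0) \<longrightarrow> 0 < Re (B W W)) \<and>
     (\<forall>h\<in>GL n. \<forall>W1\<in>V. \<forall>W2\<in>V. B (\<lambda>g. W1 (g * h)) (\<lambda>g. W2 (g * h)) = B W1 W2))"

definition howe_prop ::
  "('a::field \<Rightarrow> int) \<Rightarrow> 'a \<Rightarrow> ('a \<Rightarrow> complex) \<Rightarrow> nat \<Rightarrow> nat \<Rightarrow> ('a mat \<Rightarrow> complex) \<Rightarrow> bool" where
  "howe_prop v w \<psi> n m W \<longleftrightarrow>
     (\<forall>g\<in>GL n. \<forall>b\<in>Bbarm v w n m. \<forall>u\<in>Nm v w n m. W (g * (b * u)) = psiN \<psi> n u * W g)"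

definition normalized_howe_vector ::
  "('a::field \<Rightarrow> int) \<Rightarrow> 'a \<Rightarrow> ('a \<Rightarrow> complex) \<Rightarrow> nat \<Rightarrow> ('a mat \<Rightarrow> complex) set \<Rightarrow> nat
     \<Rightarrow> ('a mat \<Rightarrow> complex) \<Rightarrow> bool" where
  "normalized_howe_vector v w \<psi> n V m W \<longleftrightarrow>
     W \<in> V \<and> howe_prop v w \<psi> n m W \<and> W (1\<^sub>m n) = 1 \<and>
     (\<forall>W'\<in>V. howe_prop v w \<psi> n m W' \<and> W' (1\<^sub>m n) = 1 \<longrightarrow> W' = W)"

text \<open>blk_anti r A B = [[0, A],[B, 0]] with A of size (r+1)x(r+1) upper right, B of size r x r lower left.\<close>
definition blk_anti :: "nat \<Rightarrow> 'a::field mat \<Rightarrow> 'a mat \<Rightarrow> 'a mat" where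
  "blk_anti r A B = mat (2*r+1) (2*r+1) (\<lambda>(i,j).
     if i \<le> r \<and> r \<le> j then A $$ (i, j - r)
     else if r < i \<and> j < r then B $$ (i - r - 1, j) else 0)"

text \<open>blk_up r X Y = [[X, 0, Y],[0, 1, 0],[0, 0, I_r]] with r x r blocks X, Y.\<close>
definition blk_up :: "nat \<Rightarrow> 'a::field mat \<Rightarrow> 'a mat \<Rightarrow> 'a mat" where
  "blk_up r X Y = mat (2*r+1) (2*r+1) (\<lambda>(i,j).
     if i < r \<and> j < r then X $$ (i, j)
     else if i < r \<and> r < j then Y $$ (i, j - r - 1)
     else if i = j then 1 else 0)"

end

theory Submission
  imports Defs
begin

text \<open>
  Write g = H u(u_r, u_r Y), where H is the antidiagonal torus factor, u(X, Z) = blk_up r X Z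
  and Y = omega_r a' u. As W(g) is nonzero, the Whittaker law on the left and the Howe law on
  the right force psi(N) = psi_m(x) whenever N g = g x with N upper unipotent and x in J_{n,m}.

  Once the first j columns of Y vanish, column r + j of g is a_j e_j, so g conjugates the
  elementary matrix I + t E_{r+j,q} into a unipotent matrix supported in row j whose
  superdiagonal entry is read off from column j + 1 of g^-1. For q = r + j + 1 this matrix
  lies in N_{n,m} and yields a_j / a_{j+1} in 1 + p^m; for q = i < r it lies in the lower
  Borel part of J_{n,m} and bounds the entry Y_{ij}. With this bound, column j of Y splits off
  as a right factor u(I, D) in N_{n,m} on which psi is trivial, so W(g) does not change when the
  column is cleared. Clearing the columns one by one gives the value of W(g), and the column
  bounds together say that u(I, Y) lies in J_{n,m}.
\<close>

lemma index_mult_mat_sum: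
  assumes "A \<in> carrier_mat n1 n2" "B \<in> carrier_mat n2 n3" "i < n1" "j < n3"
  shows "(A * B) $$ (i,j) = (\<Sum>k\<in>{0..<n2}. A $$ (i,k) * B $$ (k,j))"
  using assms by (auto simp: scalar_prod_def intro!: sum.cong)

lemma sum_split_middle:
  fixes f :: "nat \<Rightarrow> 'a::comm_monoid_add"
  shows "(\<Sum>c\<in>{0..<2*r+1}. f c) = (\<Sum>c\<in>{0..<r}. f c) + f r + (\<Sum>c\<in>{0..<r}. f (r+1+c))"
proof -
  have split: "{0..<2*r+1} = ({0..<r} \<union> {r}) \<union> (\<lambda>c. r+1+c) ` {0..<r}"
  proof (rule Set.set_eqI, rule iffI)
    fix x assume "x \<in> {0..<2*r+1}"
    then show "x \<in> ({0..<r} \<union> {r}) \<union> (\<lambda>c. r+1+c) ` {0..<r}"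
      by (cases "x \<le> r") (auto simp: image_iff intro!: bexI[of _ "x - r - 1"])
  qed auto
  have "(\<Sum>c\<in>{0..<2*r+1}. f c) = (\<Sum>c\<in>{0..<r} \<union> {r}. f c) + (\<Sum>c\<in>(\<lambda>c. r+1+c) ` {0..<r}. f c)"
    unfolding split by (rule sum.union_disjoint) auto
  also have "(\<Sum>c\<in>(\<lambda>c. r+1+c) ` {0..<r}. f c) = (\<Sum>c\<in>{0..<r}. f (r+1+c))"
    by (subst sum.reindex) (auto simp: inj_on_def)
  also have "(\<Sum>c\<in>{0..<r} \<union> {r}. f c) = (\<Sum>c\<in>{0..<r}. f c) + f r"
    by (subst sum.union_disjoint) auto
  finally show ?thesis .
qed

lemma diagm_carrier [simp]: "diagm k f \<in> carrier_mat k k"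
  by (simp add: diagm_def)

lemma dim_diagm [simp]: "dim_row (diagm k f) = k" "dim_col (diagm k f) = k"
  by (simp_all add: diagm_def)

lemma index_diagm [simp]: "i < k \<Longrightarrow> j < k \<Longrightarrow> diagm k f $$ (i,j) = (if i = j then f i else 0)"
  by (simp add: diagm_def)

lemma index_diagm_mult:
  assumes "A \<in> carrier_mat k c" "i < k" "j < c"
  shows "(diagm k f * A) $$ (i,j) = f i * A $$ (i,j)"
proof -
  have "(diagm k f * A) $$ (i,j) = (\<Sum>x\<in>{0..<k}. diagm k f $$ (i,x) * A $$ (x,j))"
    by (rule index_mult_mat_sum[OF diagm_carrier assms])
  also have "\<dots> = (\<Sum>x\<in>{0..<k}. if x = i then f i * A $$ (i,j) else 0)"
    using assms by (intro sum.cong) auto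
  finally show ?thesis using assms by (simp add: sum.delta)
qed

lemma index_mult_diagm:
  assumes "A \<in> carrier_mat c k" "i < c" "j < k"
  shows "(A * diagm k f) $$ (i,j) = A $$ (i,j) * f j"
proof -
  have "(A * diagm k f) $$ (i,j) = (\<Sum>x\<in>{0..<k}. A $$ (i,x) * diagm k f $$ (x,j))"
    by (rule index_mult_mat_sum[OF assms(1) diagm_carrier assms(2,3)])
  also have "\<dots> = (\<Sum>x\<in>{0..<k}. if x = j then A $$ (i,j) * f j else 0)"
    using assms by (intro sum.cong) auto
  finally show ?thesis using assms by (simp add: sum.delta)
qed

lemma index_diagm_mult_mult_diagm:
  assumes "A \<in> carrier_mat n n" "i < n" "j < n"
  shows "(diagm n f * A * diagm n g) $$ (i,j) = f i * A $$ (i,j) * g j"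
proof -
  have "diagm n f * A \<in> carrier_mat n n" using assms by (intro mult_carrier_mat) auto
  then show ?thesis using index_mult_diagm[of "diagm n f * A" n n i j g] index_diagm_mult[OF assms] assms
    by simp
qed

lemma diagm_mult_diagm: "diagm n f * diagm n g = diagm n (\<lambda>i. f i * g i)"
proof (rule eq_matI)
  fix i j assume "i < dim_row (diagm n (\<lambda>i. f i * g i))" "j < dim_col (diagm n (\<lambda>i. f i * g i))"
  then show "(diagm n f * diagm n g) $$ (i,j) = diagm n (\<lambda>i. f i * g i) $$ (i,j)"
    by (subst index_mult_diagm[OF diagm_carrier]) auto
qed auto

lemma diagm_one: "diagm n (\<lambda>_. 1) = 1\<^sub>m n"
  by (intro eq_matI) auto

lemma GL_left_inverse:
  assumes "g \<in> GL n"
  obtains gi where "gi \<in> carrier_mat n n" "gi * g = 1\<^sub>m n"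
proof
  from assms have g: "g \<in> carrier_mat n n" and d: "det g \<noteq> 0" by (auto simp: GL_def)
  show "(1 / det g) \<cdot>\<^sub>m adj_mat g \<in> carrier_mat n n" using adj_mat(1)[OF g] by simp
  show "(1 / det g) \<cdot>\<^sub>m adj_mat g * g = 1\<^sub>m n"
    using adj_mat[OF g] d by (simp add: mult_smult_assoc_mat[OF adj_mat(1)[OF g] g]) (intro eq_matI, auto)
qed

lemma GL_mult:
  assumes "A \<in> GL n" "B \<in> GL n" shows "A * B \<in> GL n"
  using assms det_mult[of A n B] by (auto simp: GL_def)

lemma GL_mult_left_factor:
  assumes "A * B \<in> GL n" "A \<in> carrier_mat n n" "B \<in> carrier_mat n n"
  shows "A \<in> GL n"
  using assms det_mult[OF assms(2,3)] by (simp add: GL_def)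

lemma upper_triangular_GL:
  assumes "A \<in> carrier_mat n n" "upper_triangular A" "\<forall>i<n. A $$ (i,i) \<noteq> 0"
  shows "A \<in> GL n"
  using assms upper_triangular_imp_det_eq_0_iff[OF assms(1,2)] by (auto simp: GL_def diag_mat_def)

lemma upper_uni_GL: "u \<in> upper_uni n \<Longrightarrow> u \<in> GL n"
  by (rule upper_triangular_GL) (auto simp: upper_uni_def upper_triangular_def)

lemma diagm_GL: "\<forall>i<n. f i \<noteq> 0 \<Longrightarrow> diagm n f \<in> GL n"
  by (rule upper_triangular_GL) (auto simp: upper_triangular_def)

lemma left_inverse_entry:
  fixes g :: "'a::field mat"
  assumes g: "g \<in> carrier_mat n n" and gi: "gi \<in> carrier_mat n n" and gig: "gi * g = 1\<^sub>m n"
    and z: "z \<in> carrier_vec n" and gz: "g *\<^sub>v z = unit_vec n k" and "q < n" "k < n"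
  shows "gi $$ (q,k) = z $ q"
proof -
  have "z = (gi * g) *\<^sub>v z" using gig one_mult_mat_vec[OF z] by simp
  also have "\<dots> = gi *\<^sub>v unit_vec n k" using gi g z gz by simp
  finally have "z $ q = (gi *\<^sub>v unit_vec n k) $ q" by simp
  also have "\<dots> = (\<Sum>c\<in>{0..<n}. gi $$ (q,c) * unit_vec n k $ c)"
    using gi assms by (simp add: scalar_prod_def)
  also have "\<dots> = (\<Sum>c\<in>{0..<n}. if c = k then gi $$ (q,k) else 0)"
    by (intro sum.cong) (auto simp: unit_vec_def)
  also have "\<dots> = gi $$ (q,k)" using assms by (simp add: sum.delta)
  finally show ?thesis by simp
qed

lemma index_addrow_mat:
  "i < n \<Longrightarrow> j < n \<Longrightarrow>
   addrow_mat n t p q $$ (i,j) = (if i = j then 1 else 0) + (if i = p \<and> j = q then t else 0)"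
  by (auto simp: add.commute)

lemma addrow_mat_upper_uni: "p < q \<Longrightarrow> q < n \<Longrightarrow> addrow_mat n t p q \<in> upper_uni n"
  by (auto simp: upper_uni_def)

lemma addrow_mat_lower_borel: "q < p \<Longrightarrow> p < n \<Longrightarrow> addrow_mat n t p q \<in> lower_borel n"
  by (auto simp: lower_borel_def)

lemma diagm_mult_addrow_mat_mult_diagm:
  assumes "p < n" "q < n" "p \<noteq> q" "\<forall>i<n. f i * g i = 1"
  shows "diagm n f * addrow_mat n t p q * diagm n g = addrow_mat n (f p * t * g q) p q"
proof (rule eq_matI)
  fix i j assume "i < dim_row (addrow_mat n (f p * t * g q) p q)"
    "j < dim_col (addrow_mat n (f p * t * g q) p q)"
  then show "(diagm n f * addrow_mat n t p q * diagm n g) $$ (i,j)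
      = addrow_mat n (f p * t * g q) p q $$ (i,j)"
    using assms by (subst index_diagm_mult_mult_diagm) (auto simp: index_addrow_mat)
qed auto

lemma rank_one_mult_eq_mult_addrow_mat:
  fixes g :: "'a::field mat"
  assumes g: "g \<in> carrier_mat n n" and gi: "gi \<in> carrier_mat n n" and gig: "gi * g = 1\<^sub>m n"
    and pq: "p < n" "q < n"
  shows "mat n n (\<lambda>(x,y). (if x = y then 1 else 0) + t * g $$ (x,p) * gi $$ (q,y)) * g
         = g * addrow_mat n t p q"
proof (rule eq_matI)
  fix x y assume "x < dim_row (g * addrow_mat n t p q)" "y < dim_col (g * addrow_mat n t p q)"
  then have x: "x < n" and y: "y < n" using g by auto
  let ?N = "mat n n (\<lambda>(x,y). (if x = y then 1 else 0) + t * g $$ (x,p) * gi $$ (q,y))"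
  have "(?N * g) $$ (x,y) = (\<Sum>c\<in>{0..<n}. ?N $$ (x,c) * g $$ (c,y))"
    by (rule index_mult_mat_sum[OF _ g x y]) simp
  also have "\<dots> = (\<Sum>c\<in>{0..<n}.
      (if c = x then g $$ (x,y) else 0) + t * g $$ (x,p) * (gi $$ (q,c) * g $$ (c,y)))"
    using x by (intro sum.cong) (auto simp: algebra_simps)
  also have "\<dots> = g $$ (x,y) + t * g $$ (x,p) * (\<Sum>c\<in>{0..<n}. gi $$ (q,c) * g $$ (c,y))"
    using x by (simp add: sum.distrib sum_distrib_left sum.delta)
  also have "(\<Sum>c\<in>{0..<n}. gi $$ (q,c) * g $$ (c,y)) = (if q = y then 1 else 0)"
    using index_mult_mat_sum[OF gi g pq(2) y] gig pq y by simp
  also have "g $$ (x,y) + t * g $$ (x,p) * (if q = y then 1 else 0)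
      = (\<Sum>c\<in>{0..<n}.
          (if c = y then g $$ (x,y) else 0) + (if c = p then g $$ (x,p) * (if y = q then t else 0) else 0))"
    using y pq by (auto simp: sum.distrib sum.delta algebra_simps)
  also have "\<dots> = (\<Sum>c\<in>{0..<n}. g $$ (x,c) * addrow_mat n t p q $$ (c,y))"
    using y by (intro sum.cong) (auto simp: index_addrow_mat distrib_left)
  also have "\<dots> = (g * addrow_mat n t p q) $$ (x,y)"
    by (rule index_mult_mat_sum[OF g _ x y, symmetric]) simp
  finally show "(?N * g) $$ (x,y) = (g * addrow_mat n t p q) $$ (x,y)" .
qed (use g in auto)

definition row_unipotent :: "nat \<Rightarrow> nat \<Rightarrow> (nat \<Rightarrow> 'a::field) \<Rightarrow> 'a mat" where
  "row_unipotent n j f = mat n n (\<lambda>(x,y). (if x = y then 1 else 0) + (if x = j then f y else 0))"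

lemma row_unipotent_upper_uni: "\<forall>y\<le>j. f y = 0 \<Longrightarrow> row_unipotent n j f \<in> upper_uni n"
  by (auto simp: upper_uni_def row_unipotent_def)

lemma psiN_row_unipotent:
  assumes "j + 1 < n"
  shows "psiN \<psi> n (row_unipotent n j f) = \<psi> (f (j+1))"
proof -
  have "(\<Sum>i<n - 1. row_unipotent n j f $$ (i, Suc i)) = (\<Sum>i<n - 1. if i = j then f (j+1) else 0)"
    using assms by (intro sum.cong) (auto simp: row_unipotent_def)
  also have "\<dots> = f (j+1)" using assms by (subst sum.delta) auto
  finally show ?thesis by (simp add: psiN_def)
qed

lemma psiN_addrow_mat:
  assumes "p < n - 1"
  shows "psiN \<psi> n (addrow_mat n t p q) = \<psi> (if q = p + 1 then t else 0)"
proof -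
  have "(\<Sum>i<n - 1. addrow_mat n t p q $$ (i, Suc i))
      = (\<Sum>i<n - 1. if i = p then (if q = p + 1 then t else 0) else 0)"
    using assms by (intro sum.cong) auto
  then show ?thesis using assms by (simp add: psiN_def)
qed

lemma psiN_one: "psiN \<psi> n (1\<^sub>m n :: 'a::field mat) = \<psi> 0"
  by (simp add: psiN_def)

context
  fixes v :: "'a::field \<Rightarrow> int"
  assumes F: "padic_field v"
begin

lemma val_mult: "x \<noteq> 0 \<Longrightarrow> y \<noteq> 0 \<Longrightarrow> v (x * y) = v x + v y"
  using F unfolding padic_field_def by blast

lemma val_add_ge_min: "x \<noteq> 0 \<Longrightarrow> y \<noteq> 0 \<Longrightarrow> x + y \<noteq> 0 \<Longrightarrow> min (v x) (v y) \<le> v (x + y)"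
  using F unfolding padic_field_def by blast

lemma val_one: "v 1 = 0"
  using val_mult[of 1 1] by simp

lemma val_minus_one: "v (-1) = 0"
  using val_mult[of "-1" "-1"] val_one by simp

lemma val_uminus: "x \<noteq> 0 \<Longrightarrow> v (- x) = v x"
  using val_mult[of "-1" x] val_minus_one by simp

lemma val_inverse: "x \<noteq> 0 \<Longrightarrow> v (inverse x) = - v x"
  using val_mult[of x "inverse x"] val_one by simp

lemma val_divide: "x \<noteq> 0 \<Longrightarrow> y \<noteq> 0 \<Longrightarrow> v (x / y) = v x - v y"
  using val_mult[of x "inverse y"] val_inverse[of y] by (simp add: divide_inverse)

lemma val_power: "w \<noteq> 0 \<Longrightarrow> v w = 1 \<Longrightarrow> v (w ^ k) = int k"
  by (induction k) (auto simp: val_one val_mult)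

lemma pideal_mult: "x \<in> pideal v k1 \<Longrightarrow> y \<in> pideal v k2 \<Longrightarrow> x * y \<in> pideal v (k1 + k2)"
  by (cases "x = 0 \<or> y = 0") (auto simp: pideal_def val_mult[of x y])

lemma pideal_add: "x \<in> pideal v k \<Longrightarrow> y \<in> pideal v k \<Longrightarrow> x + y \<in> pideal v k"
  using val_add_ge_min[of x y] by (cases "x = 0 \<or> y = 0 \<or> x + y = 0") (auto simp: pideal_def)

lemma pideal_mult_unit: "x \<in> pideal v k \<Longrightarrow> c \<noteq> 0 \<Longrightarrow> v c = 0 \<Longrightarrow> x * c \<in> pideal v k"
  by (cases "x = 0") (auto simp: pideal_def val_mult[of x c])

lemma pideal_mult_divide_power:
  assumes "w \<noteq> 0" "v w = 1" "x \<in> pideal v k" "k + int A - int B = k'"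
  shows "x * w ^ A / w ^ B \<in> pideal v k'"
proof (cases "x = 0")
  case False
  then have "v (x * w ^ A / w ^ B) = v x + int A - int B"
    using assms(1,2) by (simp add: val_divide val_mult val_power)
  then show ?thesis using assms False by (auto simp: pideal_def)
qed (simp add: pideal_def)

lemma principal_unit_val:
  assumes m: "1 \<le> m" and c: "c \<in> {1 + x |x. x \<in> pideal v m}"
  shows "c \<noteq> 0" "v c = 0"
proof -
  obtain e where ce: "c = 1 + e" and e: "e \<in> pideal v m" using c by blast
  have "c \<noteq> 0 \<and> v c = 0"
  proof (cases "e = 0")
    case True then show ?thesis using ce val_one by simp
  next
    case False
    then have ve: "m \<le> v e" using e by (simp add: pideal_def)
    have c0: "c \<noteq> 0"
    proof
      assume "c = 0"
      then have "e = -1" using ce by (simp add: eq_neg_iff_add_eq_0 add.commute)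
      then show False using ve m val_minus_one by simp
    qed
    have "min (v 1) (v e) \<le> v c" using val_add_ge_min[of 1 e] False c0 ce by simp
    then have "0 \<le> v c" using ve m val_one by simp
    moreover have "min (v c) (v (- e)) \<le> v (c + - e)" using val_add_ge_min[of c "- e"] False c0 ce by simp
    then have "v c \<le> 0" using ce val_one val_uminus[OF False] ve m by simp
    ultimately show ?thesis using c0 by simp
  qed
  then show "c \<noteq> 0" "v c = 0" by simp_all
qed

end

context
  fixes v :: "'a::field \<Rightarrow> int" and \<psi> :: "'a \<Rightarrow> complex"
  assumes F: "padic_field v" and psi: "add_char_conductor_O v \<psi>"
begin

lemma add_char_add: "\<psi> (x + y) = \<psi> x * \<psi> y"
  using psi unfolding add_char_conductor_O_def by blast

lemma add_char_nonzero: "\<psi> x \<noteq> 0"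
  using psi unfolding add_char_conductor_O_def by (metis norm_zero zero_neq_one)

lemma add_char_zero: "\<psi> 0 = 1"
  using add_char_add[of 0 0] add_char_nonzero[of 0] by simp

lemma add_char_trivial_imp_pideal:
  assumes triv: "\<forall>t\<in>pideal v k. \<psi> (t * y) = 1"
  shows "y \<in> pideal v (- k)"
proof (rule ccontr)
  assume "y \<notin> pideal v (- k)"
  then have y0: "y \<noteq> 0" and vy: "v y < - k" by (auto simp: pideal_def)
  obtain x where x: "x \<in> pideal v (-1)" "\<psi> x \<noteq> 1"
    using psi unfolding add_char_conductor_O_def by blast
  have x0: "x \<noteq> 0" using x add_char_zero by auto
  have "v (x / y) = v x - v y" using val_divide[OF F x0 y0] .
  then have "x / y \<in> pideal v k" using x x0 vy by (simp add: pideal_def)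
  then have "\<psi> (x / y * y) = 1" using triv by blast
  then show False using x y0 by simp
qed

lemma add_char_dilation_invariant_imp_principal_unit:
  assumes inv: "\<forall>s\<in>pideal v (- int m). \<psi> s = \<psi> (s * c)"
  shows "c \<in> {1 + x |x. x \<in> pideal v (int m)}"
proof -
  have "\<forall>s\<in>pideal v (- int m). \<psi> (s * (c - 1)) = 1"
  proof
    fix s assume s: "s \<in> pideal v (- int m)"
    have "\<psi> (s * c) = \<psi> s * \<psi> (s * (c - 1))"
      using add_char_add[of s "s * (c - 1)"] by (simp add: algebra_simps)
    then show "\<psi> (s * (c - 1)) = 1" using inv s add_char_nonzero[of s] by auto
  qed
  then have "c - 1 \<in> pideal v (int m)" using add_char_trivial_imp_pideal by fastforce
  then show ?thesis by (intro CollectI exI[of _ "c - 1"]) simp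
qed

end

lemma Jgrp_memI:
  fixes x :: "'a::field mat"
  assumes x: "x \<in> carrier_mat n n" and w: "w \<noteq> 0"
    and entries: "\<forall>i<n. \<forall>j<n. x $$ (i,j) * w ^ (2*j*m) / w ^ (2*i*m) - (if i = j then 1 else 0)
                                 \<in> pideal v (int m)"
  shows "x \<in> Jgrp v w n m"
proof -
  let ?k = "mat n n (\<lambda>(i,j). x $$ (i,j) * w ^ (2*j*m) / w ^ (2*i*m))"
  let ?d = "diagm n (\<lambda>i. w ^ (2 * i * m))" and ?di = "diagm n (\<lambda>i. inverse (w ^ (2 * i * m)))"
  have "?k \<in> Kcong v n m" using entries by (simp add: Kcong_def)
  moreover have "x = ?d * ?k * ?di"
  proof (rule eq_matI)
    fix i j assume "i < dim_row (?d * ?k * ?di)" "j < dim_col (?d * ?k * ?di)"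
    then show "x $$ (i,j) = (?d * ?k * ?di) $$ (i,j)"
      using w by (subst index_diagm_mult_mult_diagm) (auto simp: field_simps)
  qed (use x in auto)
  ultimately show ?thesis unfolding Jgrp_def by blast
qed

lemma addrow_mat_Jgrp:
  assumes "p \<noteq> q" "p < n" "q < n" "w \<noteq> 0" "t * w ^ (2*q*m) / w ^ (2*p*m) \<in> pideal v (int m)"
  shows "addrow_mat n t p q \<in> Jgrp v w n m"
  by (rule Jgrp_memI) (use assms in \<open>auto simp: pideal_def\<close>)

lemma one_Nm: "w \<noteq> 0 \<Longrightarrow> (1\<^sub>m n :: 'a::field mat) \<in> Nm v w n m"
  by (auto simp: Nm_def upper_uni_def pideal_def intro!: Jgrp_memI)

lemma one_Bbarm: "w \<noteq> 0 \<Longrightarrow> (1\<^sub>m n :: 'a::field mat) \<in> Bbarm v w n m"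
  by (auto simp: Bbarm_def lower_borel_def pideal_def intro!: Jgrp_memI)

lemma blk_up_carrier [simp]: "blk_up r X Y \<in> carrier_mat (2*r+1) (2*r+1)"
  by (simp add: blk_up_def)

lemma dim_blk_up [simp]: "dim_row (blk_up r X Y) = 2*r+1" "dim_col (blk_up r X Y) = 2*r+1"
  by (simp_all add: blk_up_def)

lemma index_blk_up:
  "i < 2*r+1 \<Longrightarrow> j < 2*r+1 \<Longrightarrow> blk_up r X Y $$ (i,j) =
     (if i < r \<and> j < r then X $$ (i, j)
      else if i < r \<and> r < j then Y $$ (i, j - r - 1)
      else if i = j then 1 else 0)"
  by (simp add: blk_up_def)

definition prepend_zero_col :: "nat \<Rightarrow> 'a::zero mat \<Rightarrow> 'a mat" where
  "prepend_zero_col r Y = mat r (Suc r) (\<lambda>(i,j). if j = 0 then 0 else Y $$ (i, j - 1))"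

lemma prepend_zero_col_carrier [simp]: "prepend_zero_col r Y \<in> carrier_mat r (Suc r)"
  by (simp add: prepend_zero_col_def)

lemma dim_prepend_zero_col [simp]: "dim_row (prepend_zero_col r Y) = r" "dim_col (prepend_zero_col r Y) = Suc r"
  by (simp_all add: prepend_zero_col_def)

lemma blk_up_four_block:
  assumes "X \<in> carrier_mat r r"
  shows "blk_up r X Y = four_block_mat X (prepend_zero_col r Y) (0\<^sub>m (Suc r) r) (1\<^sub>m (Suc r))"
  using assms by (intro eq_matI) (auto simp: blk_up_def prepend_zero_col_def)

lemma mult_prepend_zero_col:
  fixes X :: "'a::field mat"
  assumes X: "X \<in> carrier_mat r r" and Y: "Y \<in> carrier_mat r r"
  shows "X * prepend_zero_col r Y = prepend_zero_col r (X * Y)"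
proof (rule eq_matI)
  fix i j assume "i < dim_row (prepend_zero_col r (X * Y))" "j < dim_col (prepend_zero_col r (X * Y))"
  then have i: "i < r" and j: "j < Suc r" by auto
  have "(X * prepend_zero_col r Y) $$ (i,j) = (\<Sum>c\<in>{0..<r}. X $$ (i,c) * prepend_zero_col r Y $$ (c,j))"
    by (rule index_mult_mat_sum[OF X prepend_zero_col_carrier i j])
  also have "\<dots> = (if j = 0 then 0 else (\<Sum>c\<in>{0..<r}. X $$ (i,c) * Y $$ (c,j - 1)))"
    using j by (auto simp: prepend_zero_col_def)
  also have "\<dots> = prepend_zero_col r (X * Y) $$ (i,j)"
    using i j X Y index_mult_mat_sum[OF X Y i, of "j - 1"] by (auto simp: prepend_zero_col_def)
  finally show "(X * prepend_zero_col r Y) $$ (i,j) = prepend_zero_col r (X * Y) $$ (i,j)" .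
qed (use X in \<open>auto simp: prepend_zero_col_def\<close>)

lemma prepend_zero_col_add:
  fixes A B :: "'a::field mat"
  shows "A \<in> carrier_mat r r \<Longrightarrow> B \<in> carrier_mat r r \<Longrightarrow>
   prepend_zero_col r A + prepend_zero_col r B = prepend_zero_col r (A + B)"
  by (intro eq_matI) (auto simp: prepend_zero_col_def)

lemma blk_up_mult:
  fixes A B C D :: "'a::field mat"
  assumes A: "A \<in> carrier_mat r r" and B: "B \<in> carrier_mat r r"
    and C: "C \<in> carrier_mat r r" and D: "D \<in> carrier_mat r r"
  shows "blk_up r A B * blk_up r C D = blk_up r (A * C) (A * D + B)"
proof -
  let ?B = "prepend_zero_col r B" and ?D = "prepend_zero_col r D"
    and ?O = "0\<^sub>m (Suc r) r" and ?I = "1\<^sub>m (Suc r)"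
  have "blk_up r A B * blk_up r C D
      = four_block_mat (A * C + ?B * ?O) (A * ?D + ?B * ?I) (?O * C + ?I * ?O) (?O * ?D + ?I * ?I)"
    unfolding blk_up_four_block[OF A] blk_up_four_block[OF C]
    by (rule mult_four_block_mat) (use A C in \<open>auto simp: prepend_zero_col_def\<close>)
  also have "\<dots> = four_block_mat (A * C) (prepend_zero_col r (A * D + B)) ?O ?I"
    using A B C D by (simp add: mult_prepend_zero_col prepend_zero_col_add)
  also have "\<dots> = blk_up r (A * C) (A * D + B)"
    using A C by (simp add: blk_up_four_block)
  finally show ?thesis .
qed

lemma blk_up_one_upper_uni: "blk_up r (1\<^sub>m r) Z \<in> upper_uni (2*r+1)"
  by (auto simp: upper_uni_def index_blk_up)

lemma psiN_blk_up_one: "psiN \<psi> (2*r+1) (blk_up r (1\<^sub>m r) Z) = \<psi> 0"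
proof -
  have "(\<Sum>i<2*r+1 - 1. blk_up r (1\<^sub>m r) Z $$ (i, Suc i)) = 0"
    by (intro sum.neutral) (auto simp: index_blk_up)
  then show ?thesis by (simp add: psiN_def)
qed

text \<open>The exponent is what conjugation by d^m in J_{n,m} demands of the entry in
  position (i, r + 1 + l).\<close>
lemma blk_up_one_Jgrp:
  fixes Z :: "'a::field mat"
  assumes F: "padic_field v" and w: "w \<noteq> 0" "v w = 1"
    and Z: "\<forall>i<r. \<forall>l<r. Z $$ (i,l) \<in> pideal v (- (int m + 2 * int m * (int r + int l - int i)))"
  shows "blk_up r (1\<^sub>m r) Z \<in> Jgrp v w (2*r+1) m"
proof (rule Jgrp_memI[OF blk_up_carrier w(1)], intro allI impI)
  fix i j assume i: "i < 2*r+1" and j: "j < 2*r+1"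
  show "blk_up r (1\<^sub>m r) Z $$ (i, j) * w ^ (2 * j * m) / w ^ (2 * i * m) - (if i = j then 1 else 0)
        \<in> pideal v (int m)"
  proof (cases "i < r \<and> r < j")
    case True
    then have "j - r - 1 < r" using j by auto
    then have "Z $$ (i, j - r - 1) * w ^ (2 * j * m) / w ^ (2 * i * m) \<in> pideal v (int m)"
      using True by (intro pideal_mult_divide_power[OF F w Z[rule_format]]) (auto simp: algebra_simps of_nat_diff)
    then show ?thesis using True i j by (simp add: index_blk_up)
  next
    case False
    then show ?thesis using i j w by (auto simp: index_blk_up pideal_def)
  qed
qed

definition antidiag_torus :: "nat \<Rightarrow> (nat \<Rightarrow> 'a::field) \<Rightarrow> (nat \<Rightarrow> 'a) \<Rightarrow> 'a mat" where
  "antidiag_torus r a b = blk_anti r (diagm (r+1) a) (diagm r b * omega r)"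

lemma antidiag_torus_carrier [simp]: "antidiag_torus r a b \<in> carrier_mat (2*r+1) (2*r+1)"
  by (simp add: antidiag_torus_def blk_anti_def)

lemma dim_antidiag_torus [simp]:
  "dim_row (antidiag_torus r a b) = 2*r+1" "dim_col (antidiag_torus r a b) = 2*r+1"
  by (simp_all add: antidiag_torus_def blk_anti_def)

lemma index_antidiag_torus:
  assumes x: "x < 2*r+1" and c: "c < 2*r+1"
  shows "antidiag_torus r a b $$ (x,c) = (if x \<le> r then (if c = r + x then a x else 0)
                              else (if c = 2*r - x then b (x - r - 1) else 0))"
proof (cases "x \<le> r \<or> r \<le> c")
  case True
  then show ?thesis using x c by (auto simp: antidiag_torus_def blk_anti_def)
next
  case False
  then have "(diagm r b * omega r) $$ (x - r - 1, c) = b (x - r - 1) * omega r $$ (x - r - 1, c)"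
    using x by (intro index_diagm_mult[of _ r r]) (auto simp: omega_def)
  then show ?thesis using False x c by (auto simp: antidiag_torus_def blk_anti_def omega_def split: if_splits)
qed

lemma index_antidiag_torus_mult:
  assumes M: "M \<in> carrier_mat (2*r+1) (2*r+1)" and x: "x < 2*r+1" and y: "y < 2*r+1"
  shows "(antidiag_torus r a b * M) $$ (x,y)
       = (if x \<le> r then a x * M $$ (r+x, y) else b (x-r-1) * M $$ (2*r-x, y))"
proof -
  have "(antidiag_torus r a b * M) $$ (x,y)
      = (\<Sum>c\<in>{0..<2*r+1}. antidiag_torus r a b $$ (x,c) * M $$ (c,y))"
    by (rule index_mult_mat_sum[OF antidiag_torus_carrier M x y])
  also have "\<dots> = (\<Sum>c\<in>{0..<2*r+1}. if c = (if x \<le> r then r + x else 2*r - x) then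
        (if x \<le> r then a x * M $$ (r+x, y) else b (x-r-1) * M $$ (2*r-x, y)) else 0)"
    using x by (intro sum.cong) (auto simp: index_antidiag_torus)
  also have "\<dots> = (if x \<le> r then a x * M $$ (r+x, y) else b (x-r-1) * M $$ (2*r-x, y))"
    using x by (subst sum.delta) auto
  finally show ?thesis .
qed

lemma antidiag_torus_mult_unit_vec:
  assumes "k \<le> r"
  shows "antidiag_torus r a b *\<^sub>v unit_vec (2*r+1) (r+k) = a k \<cdot>\<^sub>v unit_vec (2*r+1) k"
  using assms by (intro eq_vecI) (auto simp: index_antidiag_torus)

text \<open>The element g of the proposition, with Y in place of the block omega_r a' u.\<close>
definition gelt :: "nat \<Rightarrow> (nat \<Rightarrow> 'a::field) \<Rightarrow> (nat \<Rightarrow> 'a) \<Rightarrow> 'a mat \<Rightarrow> 'a mat \<Rightarrow> 'a mat" where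
  "gelt r a b ur Y = antidiag_torus r a b * blk_up r ur (ur * Y)"

lemma gelt_carrier [simp]: "gelt r a b ur Y \<in> carrier_mat (2*r+1) (2*r+1)"
  unfolding gelt_def by (rule mult_carrier_mat[OF antidiag_torus_carrier blk_up_carrier])

lemma index_gelt:
  assumes x: "x < 2*r+1" and y: "y < 2*r+1"
  shows "gelt r a b ur Y $$ (x,y) = (if x \<le> r then (if y = r + x then a x else 0)
            else b (x-r-1) * blk_up r ur (ur * Y) $$ (2*r-x, y))"
proof -
  have "x \<le> r \<Longrightarrow> blk_up r ur (ur * Y) $$ (r+x, y) = (if y = r + x then 1 else 0)"
    using x y by (simp add: index_blk_up)
  then show ?thesis unfolding gelt_def by (simp add: index_antidiag_torus_mult[OF blk_up_carrier x y])
qed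

lemma gelt_zero:
  "ur \<in> carrier_mat r r \<Longrightarrow>
   gelt r a b ur (0\<^sub>m r r) = blk_anti r (diagm (r+1) a) (diagm r b * omega r) * blk_up r ur (0\<^sub>m r r)"
  by (simp add: gelt_def antidiag_torus_def right_mult_zero_mat)

lemma gelt_add:
  assumes ur: "ur \<in> carrier_mat r r" and Y1: "Y1 \<in> carrier_mat r r" and Y2: "Y2 \<in> carrier_mat r r"
  shows "gelt r a b ur (Y1 + Y2) = gelt r a b ur Y1 * blk_up r (1\<^sub>m r) Y2"
proof -
  have "gelt r a b ur Y1 * blk_up r (1\<^sub>m r) Y2
      = antidiag_torus r a b * (blk_up r ur (ur * Y1) * blk_up r (1\<^sub>m r) Y2)"
    unfolding gelt_def by (rule assoc_mult_mat[OF antidiag_torus_carrier blk_up_carrier blk_up_carrier])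
  also have "blk_up r ur (ur * Y1) * blk_up r (1\<^sub>m r) Y2 = blk_up r ur (ur * (Y1 + Y2))"
    using ur Y1 Y2
    by (simp add: blk_up_mult mult_add_distrib_mat comm_add_mat[of "ur * Y1" r r "ur * Y2"])
  finally show ?thesis by (simp add: gelt_def)
qed

definition blk_up_inv_col :: "nat \<Rightarrow> 'a::field mat \<Rightarrow> nat \<Rightarrow> 'a vec" where
  "blk_up_inv_col r Y k = vec (2*r+1) (\<lambda>c. if c = r + k then 1
       else if c < r \<and> 0 < k then - Y $$ (c, k - 1) else 0)"

lemma blk_up_inv_col_carrier [simp]: "blk_up_inv_col r Y k \<in> carrier_vec (2*r+1)"
  by (simp add: blk_up_inv_col_def)

lemma dim_blk_up_inv_col [simp]: "dim_vec (blk_up_inv_col r Y k) = 2*r+1"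
  by (simp add: blk_up_inv_col_def)

lemma index_blk_up_inv_col:
  "c < 2*r+1 \<Longrightarrow> blk_up_inv_col r Y k $ c
     = (if c = r + k then 1 else if c < r \<and> 0 < k then - Y $$ (c, k - 1) else 0)"
  by (simp add: blk_up_inv_col_def)

lemma blk_up_mult_inv_col:
  assumes ur: "ur \<in> carrier_mat r r" and Y: "Y \<in> carrier_mat r r" and k: "k \<le> r"
  shows "blk_up r ur (ur * Y) *\<^sub>v blk_up_inv_col r Y k = unit_vec (2*r+1) (r+k)"
proof (rule eq_vecI)
  fix x assume "x < dim_vec (unit_vec (2*r+1) (r+k))"
  then have x: "x < 2*r+1" by simp
  let ?B = "blk_up r ur (ur * Y)" and ?z = "blk_up_inv_col r Y k"
  have "(?B *\<^sub>v ?z) $ x = row ?B x \<bullet> ?z" using x by simp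
  also have "\<dots> = (\<Sum>c\<in>{0..<2*r+1}. ?B $$ (x,c) * ?z $ c)"
    unfolding scalar_prod_def using x by (intro sum.cong) auto
  also have "\<dots> = (\<Sum>c\<in>{0..<r}. ?B $$ (x,c) * ?z $ c) + ?B $$ (x,r) * ?z $ r
                  + (\<Sum>c\<in>{0..<r}. ?B $$ (x,r+1+c) * ?z $ (r+1+c))"
    by (rule sum_split_middle)
  also have "\<dots> = unit_vec (2*r+1) (r+k) $ x"
  proof (cases "x < r")
    case True
    have "(\<Sum>c\<in>{0..<r}. ?B $$ (x,c) * ?z $ c)
        = - (if 0 < k then (\<Sum>c\<in>{0..<r}. ur $$ (x,c) * Y $$ (c, k - 1)) else 0)"
      using True k by (auto simp: index_blk_up index_blk_up_inv_col sum_negf intro!: sum.cong)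
    moreover have "(\<Sum>c\<in>{0..<r}. ?B $$ (x,r+1+c) * ?z $ (r+1+c))
        = (\<Sum>c\<in>{0..<r}. if c = k - 1 then (if 0 < k then (ur * Y) $$ (x, k - 1) else 0) else 0)"
      using True k by (intro sum.cong) (auto simp: index_blk_up index_blk_up_inv_col)
    moreover have "0 < k \<Longrightarrow> (ur * Y) $$ (x, k - 1) = (\<Sum>c\<in>{0..<r}. ur $$ (x,c) * Y $$ (c, k - 1))"
      using True k by (intro index_mult_mat_sum[OF ur Y]) auto
    ultimately show ?thesis using True k by (simp add: index_blk_up sum.delta)
  next
    case False
    then have "(\<Sum>c\<in>{0..<r}. ?B $$ (x,c) * ?z $ c) = 0"
      using x by (intro sum.neutral) (auto simp: index_blk_up)
    moreover have "(\<Sum>c\<in>{0..<r}. ?B $$ (x,r+1+c) * ?z $ (r+1+c))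
        = (\<Sum>c\<in>{0..<r}. if r < x \<and> c = x - r - 1 then ?z $ x else 0)"
      using False x by (intro sum.cong) (auto simp: index_blk_up)
    moreover have "?z $ x = (if x = r + k then 1 else 0)" using False x by (simp add: index_blk_up_inv_col)
    ultimately show ?thesis using False x k by (auto simp: index_blk_up sum.delta)
  qed
  finally show "(?B *\<^sub>v ?z) $ x = unit_vec (2*r+1) (r+k) $ x" .
qed simp

lemma gelt_mult_inv_col:
  assumes ur: "ur \<in> carrier_mat r r" and Y: "Y \<in> carrier_mat r r" and k: "k \<le> r" and ak: "a k \<noteq> 0"
  shows "gelt r a b ur Y *\<^sub>v ((1 / a k) \<cdot>\<^sub>v blk_up_inv_col r Y k) = unit_vec (2*r+1) k"
proof -
  let ?H = "antidiag_torus r a b" and ?B = "blk_up r ur (ur * Y)" and ?z = "blk_up_inv_col r Y k"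
  have "gelt r a b ur Y *\<^sub>v ((1 / a k) \<cdot>\<^sub>v ?z) = ?H *\<^sub>v (?B *\<^sub>v ((1 / a k) \<cdot>\<^sub>v ?z))"
    unfolding gelt_def
    by (rule assoc_mult_mat_vec[OF antidiag_torus_carrier blk_up_carrier]) (simp add: blk_up_inv_col_def)
  also have "?B *\<^sub>v ((1 / a k) \<cdot>\<^sub>v ?z) = (1 / a k) \<cdot>\<^sub>v unit_vec (2*r+1) (r+k)"
    unfolding mult_mat_vec[OF blk_up_carrier blk_up_inv_col_carrier] blk_up_mult_inv_col[OF ur Y k] ..
  also have "?H *\<^sub>v \<dots> = (1 / a k) \<cdot>\<^sub>v (a k \<cdot>\<^sub>v unit_vec (2*r+1) k)"
    unfolding mult_mat_vec[OF antidiag_torus_carrier unit_vec_carrier] antidiag_torus_mult_unit_vec[OF k] ..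
  also have "\<dots> = unit_vec (2*r+1) k" using ak by (simp add: smult_smult_assoc)
  finally show ?thesis .
qed

lemma gelt_left_inverse_entry:
  assumes ur: "ur \<in> carrier_mat r r" and Y: "Y \<in> carrier_mat r r"
    and gi: "gi \<in> carrier_mat (2*r+1) (2*r+1)" and inv: "gi * gelt r a b ur Y = 1\<^sub>m (2*r+1)"
    and q: "q < 2*r+1" and k: "k \<le> r" and ak: "a k \<noteq> 0"
  shows "gi $$ (q,k) = blk_up_inv_col r Y k $ q / a k"
  using left_inverse_entry[OF gelt_carrier gi inv _
      gelt_mult_inv_col[OF ur Y k, where a = a and b = b, OF ak] q] k q
  by (simp add: blk_up_inv_col_def)

definition zero_first_cols :: "nat \<Rightarrow> 'a::zero mat \<Rightarrow> 'a mat" where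
  "zero_first_cols j Y = mat (dim_row Y) (dim_col Y) (\<lambda>(i,l). if l < j then 0 else Y $$ (i,l))"

lemma zero_first_cols_carrier [simp]: "Y \<in> carrier_mat r r \<Longrightarrow> zero_first_cols j Y \<in> carrier_mat r r"
  by (simp add: zero_first_cols_def)

lemma index_zero_first_cols:
  "Y \<in> carrier_mat r r \<Longrightarrow> i < r \<Longrightarrow> l < r \<Longrightarrow>
   zero_first_cols j Y $$ (i,l) = (if l < j then 0 else Y $$ (i,l))"
  by (simp add: zero_first_cols_def)

lemma zero_first_cols_0: "Y \<in> carrier_mat r r \<Longrightarrow> zero_first_cols 0 Y = Y"
  by (intro eq_matI) (auto simp: zero_first_cols_def)

lemma zero_first_cols_all: "Y \<in> carrier_mat r r \<Longrightarrow> zero_first_cols r Y = 0\<^sub>m r r"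
  by (intro eq_matI) (auto simp: zero_first_cols_def)

lemma zero_first_cols_Suc:
  fixes Y :: "'a::monoid_add mat"
  assumes "Y \<in> carrier_mat r r"
  shows "zero_first_cols j Y
       = zero_first_cols (Suc j) Y + mat r r (\<lambda>(i,l). if l = j then Y $$ (i,j) else 0)"
  using assms by (intro eq_matI) (auto simp: zero_first_cols_def)

lemma gelt_zero_first_cols_col:
  assumes ur: "ur \<in> carrier_mat r r" and Y: "Y \<in> carrier_mat r r" and j: "j < r" and x: "x < 2*r+1"
  shows "gelt r a b ur (zero_first_cols j Y) $$ (x, r + j) = (if x = j then a j else 0)"
proof (cases "x \<le> r")
  case True
  then show ?thesis using x j by (auto simp: index_gelt)
next
  case False
  then have i: "2*r - x < r" using x by auto
  have "blk_up r ur (ur * zero_first_cols j Y) $$ (2*r-x, r+j) = 0"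
  proof (cases "j = 0")
    case True
    then show ?thesis using i by (simp add: index_blk_up)
  next
    case False
    have "(ur * zero_first_cols j Y) $$ (2*r-x, j - 1)
        = (\<Sum>c\<in>{0..<r}. ur $$ (2*r-x, c) * zero_first_cols j Y $$ (c, j - 1))"
      using j by (intro index_mult_mat_sum[OF ur zero_first_cols_carrier[OF Y] i]) auto
    also have "\<dots> = 0" using False j Y by (intro sum.neutral) (auto simp: index_zero_first_cols)
    finally show ?thesis using i False j by (simp add: index_blk_up)
  qed
  then show ?thesis using False x j by (simp add: index_gelt)
qed

lemma gelt_zero_first_cols_conj_addrow_mat:
  fixes Y :: "'a::field mat"
  assumes ur: "ur \<in> carrier_mat r r" and Y: "Y \<in> carrier_mat r r" and j: "j < r"
    and gi: "gi \<in> carrier_mat (2*r+1) (2*r+1)"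
    and inv: "gi * gelt r a b ur (zero_first_cols j Y) = 1\<^sub>m (2*r+1)" and q: "q < 2*r+1"
  shows "row_unipotent (2*r+1) j (\<lambda>y. t * a j * gi $$ (q,y)) * gelt r a b ur (zero_first_cols j Y)
       = gelt r a b ur (zero_first_cols j Y) * addrow_mat (2*r+1) t (r+j) q"
proof -
  let ?g = "gelt r a b ur (zero_first_cols j Y)"
  have "row_unipotent (2*r+1) j (\<lambda>y. t * a j * gi $$ (q,y))
      = mat (2*r+1) (2*r+1) (\<lambda>(x,y). (if x = y then 1 else 0) + t * ?g $$ (x, r+j) * gi $$ (q,y))"
    using gelt_zero_first_cols_col[OF ur Y j] by (intro eq_matI) (auto simp: row_unipotent_def)
  then show ?thesis
    using rank_one_mult_eq_mult_addrow_mat[OF gelt_carrier gi inv _ q] j by simp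
qed

lemma gelt_conj_addrow_mat:
  fixes Y :: "'a::field mat"
  assumes ur: "ur \<in> carrier_mat r r" and Y: "Y \<in> carrier_mat r r" and j: "j < r"
    and a: "\<forall>i\<le>r. a i \<noteq> 0" and GL: "gelt r a b ur (zero_first_cols j Y) \<in> GL (2*r+1)"
    and q: "q < r \<or> q = r + j + 1"
  obtains N where "N \<in> upper_uni (2*r+1)"
    "psiN \<psi> (2*r+1) N = \<psi> (t * (a j / a (Suc j)) * blk_up_inv_col r (zero_first_cols j Y) (Suc j) $ q)"
    "N * gelt r a b ur (zero_first_cols j Y) = gelt r a b ur (zero_first_cols j Y) * addrow_mat (2*r+1) t (r+j) q"
proof -
  obtain gi where gi: "gi \<in> carrier_mat (2*r+1) (2*r+1)"
    and inv: "gi * gelt r a b ur (zero_first_cols j Y) = 1\<^sub>m (2*r+1)"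
    using GL_left_inverse[OF GL] by blast
  have gi_entry: "gi $$ (q,y) = blk_up_inv_col r (zero_first_cols j Y) y $ q / a y" if "y \<le> r" for y
    using gelt_left_inverse_entry[OF ur _ gi inv _ that] a q j that Y by auto
  define f where "f y = t * a j * gi $$ (q,y)" for y
  have "\<forall>y\<le>j. f y = 0"
    using q j Y by (auto simp: f_def gi_entry index_blk_up_inv_col index_zero_first_cols)
  then have "row_unipotent (2*r+1) j f \<in> upper_uni (2*r+1)" by (rule row_unipotent_upper_uni)
  moreover have "psiN \<psi> (2*r+1) (row_unipotent (2*r+1) j f)
      = \<psi> (t * (a j / a (Suc j)) * blk_up_inv_col r (zero_first_cols j Y) (Suc j) $ q)"
    using j by (simp add: psiN_row_unipotent f_def gi_entry)
  moreover have "row_unipotent (2*r+1) j f * gelt r a b ur (zero_first_cols j Y)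
      = gelt r a b ur (zero_first_cols j Y) * addrow_mat (2*r+1) t (r+j) q"
    unfolding f_def using q j by (intro gelt_zero_first_cols_conj_addrow_mat[OF ur Y j gi inv]) auto
  ultimately show ?thesis using that by blast
qed

locale howe_vector =
  fixes v :: "'a::field \<Rightarrow> int" and w :: 'a and \<psi> :: "'a \<Rightarrow> complex"
    and n m :: nat and V :: "('a mat \<Rightarrow> complex) set" and W :: "'a mat \<Rightarrow> complex"
  assumes padic: "padic_field v" and unif: "w \<noteq> 0" "v w = 1"
    and char: "add_char_conductor_O v \<psi>"
    and whittaker: "irred_whittaker_model v \<psi> n V"
    and howe: "normalized_howe_vector v w \<psi> n V m W"
begin

lemma W_in_V: "W \<in> V"
  using howe by (simp add: normalized_howe_vector_def)

lemma GL_of_W_nonzero: "W g \<noteq> 0 \<Longrightarrow> g \<in> GL n"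
proof -
  have "\<forall>W\<in>V. \<forall>g. g \<notin> GL n \<longrightarrow> W g = 0" using whittaker by (simp add: irred_whittaker_model_def)
  then show "W g \<noteq> 0 \<Longrightarrow> g \<in> GL n" using W_in_V by blast
qed

lemma W_upper_uni_mult: "u \<in> upper_uni n \<Longrightarrow> g \<in> GL n \<Longrightarrow> W (u * g) = psiN \<psi> n u * W g"
proof -
  have "\<forall>W\<in>V. \<forall>u\<in>upper_uni n. \<forall>g\<in>GL n. W (u * g) = psiN \<psi> n u * W g"
    using whittaker by (simp add: irred_whittaker_model_def)
  then show "u \<in> upper_uni n \<Longrightarrow> g \<in> GL n \<Longrightarrow> W (u * g) = psiN \<psi> n u * W g" using W_in_V by blast
qed

lemma W_mult_Nm:
  assumes g: "g \<in> GL n" and u: "u \<in> Nm v w n m"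
  shows "W (g * u) = psiN \<psi> n u * W g"
proof -
  have "W (g * (1\<^sub>m n * u)) = psiN \<psi> n u * W g"
    using howe g one_Bbarm[OF unif(1)] u unfolding normalized_howe_vector_def howe_prop_def by blast
  moreover have "u \<in> carrier_mat n n" using u by (simp add: Nm_def upper_uni_def)
  ultimately show ?thesis by simp
qed

lemma W_mult_Bbarm:
  assumes g: "g \<in> GL n" and b: "b \<in> Bbarm v w n m"
  shows "W (g * b) = W g"
proof -
  have "W (g * (b * 1\<^sub>m n)) = psiN \<psi> n (1\<^sub>m n) * W g"
    using howe g b one_Nm[OF unif(1)] unfolding normalized_howe_vector_def howe_prop_def by blast
  moreover have "b \<in> carrier_mat n n" using b by (simp add: Bbarm_def lower_borel_def)
  ultimately show ?thesis using add_char_zero[OF padic char] by (simp add: psiN_one)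
qed

lemma psiN_eq_of_conj_Nm:
  assumes nz: "W g \<noteq> 0" and x: "x \<in> Nm v w n m" and N: "N \<in> upper_uni n" and conj: "N * g = g * x"
  shows "psiN \<psi> n x = psiN \<psi> n N"
  using W_mult_Nm[OF GL_of_W_nonzero[OF nz] x] W_upper_uni_mult[OF N GL_of_W_nonzero[OF nz]] conj nz
  by simp

lemma psiN_eq_one_of_conj_Bbarm:
  assumes nz: "W g \<noteq> 0" and x: "x \<in> Bbarm v w n m" and N: "N \<in> upper_uni n" and conj: "N * g = g * x"
  shows "psiN \<psi> n N = 1"
  using W_mult_Bbarm[OF GL_of_W_nonzero[OF nz] x] W_upper_uni_mult[OF N GL_of_W_nonzero[OF nz]] conj nz
  by simp

text \<open>At level 0 the torus element t = diag(w, 1, ..., 1) lies in the lower Borel part of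
  J_{n,0}, so W (t^-1 u t) = W 1 for every u in N_{n,0}; but t^-1 u t ranges over elementary
  matrices with entry in p^-1, on which psi is nontrivial.\<close>
lemma level_pos:
  assumes n: "2 \<le> n"
  shows "0 < m"
proof (rule ccontr)
  assume "\<not> 0 < m"
  then have m0: "m = 0" by simp
  obtain x where x: "x \<in> pideal v (-1)" "\<psi> x \<noteq> 1"
    using char unfolding add_char_conductor_O_def by blast
  have psi_O: "\<forall>y\<in>pideal v 0. \<psi> y = 1" using char unfolding add_char_conductor_O_def by blast
  let ?t = "diagm n (\<lambda>i. if i = 0 then w else 1)"
  let ?ti = "diagm n (\<lambda>i. if i = 0 then inverse w else 1)"
  let ?u = "addrow_mat n (x * w) 0 1"
  have W1: "W (1\<^sub>m n) = 1" using howe by (simp add: normalized_howe_vector_def)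
  have tiGL: "?ti \<in> GL n" using unif by (intro diagm_GL) auto
  have "x * w \<in> pideal v 0"
    using pideal_mult[OF padic x(1), of w 1] unif by (simp add: pideal_def)
  then have u: "?u \<in> Nm v w n m" "psiN \<psi> n ?u = 1"
    using n unif psi_O by (auto simp: Nm_def m0 psiN_addrow_mat intro!: addrow_mat_upper_uni addrow_mat_Jgrp)
  have "w + -1 \<in> pideal v 0"
    using unif val_minus_one[OF padic] by (intro pideal_add[OF padic]) (auto simp: pideal_def)
  then have t: "?t \<in> Bbarm v w n m"
    using unif by (auto simp: Bbarm_def lower_borel_def m0 pideal_def intro!: Jgrp_memI)
  have "?ti * ?t = 1\<^sub>m n"
    unfolding diagm_mult_diagm diagm_one[symmetric] using unif by (intro arg_cong[where f = "diagm n"]) auto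
  then have "W (?ti * ?u * ?t) = 1"
    using W_mult_Bbarm[OF GL_mult[OF tiGL upper_uni_GL[OF u(1)[unfolded Nm_def, THEN IntD1]]] t]
      W_mult_Nm[OF tiGL u(1)] u(2) W_mult_Bbarm[OF tiGL t] W1 by simp
  moreover have "?ti * ?u * ?t = addrow_mat n x 0 1"
    using n unif by (subst diagm_mult_addrow_mat_mult_diagm) auto
  moreover have "W (addrow_mat n x 0 1 * 1\<^sub>m n) = psiN \<psi> n (addrow_mat n x 0 1) * W (1\<^sub>m n)"
    using n by (intro W_upper_uni_mult addrow_mat_upper_uni upper_uni_GL) (auto simp: upper_uni_def)
  ultimately show False using W1 n x(2) by (simp add: psiN_addrow_mat)
qed

lemma gelt_ratio_principal_unit:
  assumes n: "n = 2*r+1" and a: "\<forall>i\<le>r. a i \<noteq> 0"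
    and ur: "ur \<in> carrier_mat r r" and Y: "Y \<in> carrier_mat r r" and j: "j < r"
    and nz: "W (gelt r a b ur (zero_first_cols j Y)) \<noteq> 0"
  shows "a j / a (Suc j) \<in> {1 + x |x. x \<in> pideal v (int m)}"
proof (rule add_char_dilation_invariant_imp_principal_unit[OF padic char], intro ballI)
  fix s assume s: "s \<in> pideal v (- int m)"
  let ?x = "addrow_mat n s (r+j) (r+j+1)"
  obtain N where N: "N \<in> upper_uni n"
    "psiN \<psi> n N = \<psi> (s * (a j / a (Suc j)) * blk_up_inv_col r (zero_first_cols j Y) (Suc j) $ (r+j+1))"
    "N * gelt r a b ur (zero_first_cols j Y) = gelt r a b ur (zero_first_cols j Y) * ?x"
    unfolding n by (rule gelt_conj_addrow_mat[OF ur Y j a GL_of_W_nonzero[OF nz, unfolded n]]) blast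
  have "?x \<in> Jgrp v w n m"
    using n j unif by (intro addrow_mat_Jgrp pideal_mult_divide_power[OF padic unif s]) (auto simp: algebra_simps)
  then have "?x \<in> Nm v w n m" using n j by (simp add: Nm_def addrow_mat_upper_uni)
  from psiN_eq_of_conj_Nm[OF nz this N(1,3)]
  show "\<psi> s = \<psi> (s * (a j / a (Suc j)))"
    using N(2) n j by (simp add: psiN_addrow_mat index_blk_up_inv_col)
qed

lemma gelt_column_pideal:
  assumes n: "n = 2*r+1" and a: "\<forall>i\<le>r. a i \<noteq> 0"
    and ur: "ur \<in> carrier_mat r r" and Y: "Y \<in> carrier_mat r r" and j: "j < r"
    and nz: "W (gelt r a b ur (zero_first_cols j Y)) \<noteq> 0" and i: "i < r"
  shows "Y $$ (i,j) \<in> pideal v (- (int m + 2 * int m * (int r + int j - int i)))"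
proof -
  define k where "k = int m + 2 * int m * (int r + int j - int i)"
  define c where "c = a j / a (Suc j)"
  have "0 < m" using level_pos n j by simp
  then have c: "c \<noteq> 0" "v c = 0"
    using principal_unit_val[OF padic _ gelt_ratio_principal_unit[OF n a ur Y j nz]] by (simp_all add: c_def)
  have "\<forall>t\<in>pideal v k. \<psi> (t * ((- c) * Y $$ (i,j))) = 1"
  proof
    fix t assume t: "t \<in> pideal v k"
    let ?x = "addrow_mat n t (r+j) i"
    obtain N where N: "N \<in> upper_uni n"
      "psiN \<psi> n N = \<psi> (t * c * blk_up_inv_col r (zero_first_cols j Y) (Suc j) $ i)"
      "N * gelt r a b ur (zero_first_cols j Y) = gelt r a b ur (zero_first_cols j Y) * ?x"
      unfolding n c_def using i
      by (rule gelt_conj_addrow_mat[OF ur Y j a GL_of_W_nonzero[OF nz, unfolded n], OF disjI1])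
    have "?x \<in> Jgrp v w n m"
      using n i j unif
      by (intro addrow_mat_Jgrp pideal_mult_divide_power[OF padic unif t]) (auto simp: k_def algebra_simps)
    then have "?x \<in> Bbarm v w n m" using n i j by (simp add: Bbarm_def addrow_mat_lower_borel)
    from psiN_eq_one_of_conj_Bbarm[OF nz this N(1,3)]
    show "\<psi> (t * ((- c) * Y $$ (i,j))) = 1"
      using N(2) n i j Y by (simp add: index_blk_up_inv_col index_zero_first_cols mult.assoc)
  qed
  then have "(- c) * Y $$ (i,j) \<in> pideal v (- k)"
    by (rule add_char_trivial_imp_pideal[OF padic char])
  then have "(- c) * Y $$ (i,j) * (- inverse c) \<in> pideal v (- k)"
    by (rule pideal_mult_unit[OF padic])
      (use c in \<open>simp_all add: val_uminus[OF padic] val_inverse[OF padic]\<close>)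
  moreover have "(- c) * Y $$ (i,j) * (- inverse c) = Y $$ (i,j)" using c by (simp add: field_simps)
  ultimately show ?thesis unfolding k_def by metis
qed

lemma W_gelt_zero_first_cols_Suc:
  assumes n: "n = 2*r+1" and a: "\<forall>i\<le>r. a i \<noteq> 0"
    and ur: "ur \<in> carrier_mat r r" and Y: "Y \<in> carrier_mat r r" and j: "j < r"
    and nz: "W (gelt r a b ur (zero_first_cols j Y)) \<noteq> 0"
  shows "W (gelt r a b ur (zero_first_cols j Y)) = W (gelt r a b ur (zero_first_cols (Suc j) Y))"
proof -
  let ?D = "mat r r (\<lambda>(i,l). if l = j then Y $$ (i,j) else 0)"
  let ?g' = "gelt r a b ur (zero_first_cols (Suc j) Y)"
  have fac: "gelt r a b ur (zero_first_cols j Y) = ?g' * blk_up r (1\<^sub>m r) ?D"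
    unfolding zero_first_cols_Suc[OF Y, of j] by (rule gelt_add[OF ur zero_first_cols_carrier[OF Y]]) simp
  have "\<forall>i<r. \<forall>l<r. ?D $$ (i,l) \<in> pideal v (- (int m + 2 * int m * (int r + int l - int i)))"
    using gelt_column_pideal[OF n a ur Y j nz] by (simp add: pideal_def)
  then have "blk_up r (1\<^sub>m r) ?D \<in> Jgrp v w n m"
    unfolding n by (rule blk_up_one_Jgrp[OF padic unif])
  then have D: "blk_up r (1\<^sub>m r) ?D \<in> Nm v w n m" using blk_up_one_upper_uni n by (simp add: Nm_def)
  have "?g' * blk_up r (1\<^sub>m r) ?D \<in> GL n" using GL_of_W_nonzero[OF nz] unfolding fac .
  then have "?g' \<in> GL n"
    unfolding n using GL_mult_left_factor gelt_carrier blk_up_carrier by blast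
  from W_mult_Nm[OF this D] have "W (?g' * blk_up r (1\<^sub>m r) ?D) = W ?g'"
    unfolding n psiN_blk_up_one add_char_zero[OF padic char] by simp
  then show ?thesis unfolding fac .
qed

lemma W_gelt_zero_first_cols:
  assumes n: "n = 2*r+1" and a: "\<forall>i\<le>r. a i \<noteq> 0"
    and ur: "ur \<in> carrier_mat r r" and Y: "Y \<in> carrier_mat r r"
    and nz: "W (gelt r a b ur Y) \<noteq> 0" and j: "j \<le> r"
  shows "W (gelt r a b ur (zero_first_cols j Y)) = W (gelt r a b ur Y)"
  using j
proof (induction j)
  case 0
  then show ?case using zero_first_cols_0[OF Y] by simp
next
  case (Suc j)
  then have "W (gelt r a b ur (zero_first_cols j Y)) = W (gelt r a b ur Y)" by simp
  with Suc.prems show ?case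
    using W_gelt_zero_first_cols_Suc[OF n a ur Y, of j] nz by simp
qed

end

theorem proposition3p4:
  fixes v :: "'a::field \<Rightarrow> int" and \<psi> :: "'a \<Rightarrow> complex" and unif_w :: 'a
    and r n m :: nat and V :: "('a mat \<Rightarrow> complex) set" and W :: "'a mat \<Rightarrow> complex"
    and a a' b :: "nat \<Rightarrow> 'a" and ur u :: "'a mat"
  assumes F: "padic_field v"
    and unif: "unif_w \<noteq> 0" "v unif_w = 1"
    and psi: "add_char_conductor_O v \<psi>"
    and n: "n = 2 * r + 1"
    and pi: "irred_whittaker_model v \<psi> n V" "unitarizable n V"
    and howe: "normalized_howe_vector v unif_w \<psi> n V m W"
    and a: "\<forall>i\<le>r. a i \<noteq> 0"
    and a': "\<forall>i<r. a' i \<noteq> 0"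
    and b: "\<forall>i<r. b i \<noteq> 0"
    and ur: "ur \<in> upper_uni r" and u: "u \<in> upper_uni r"
    and nz: "W (blk_anti r (diagm (r+1) a) (diagm r b * omega r)
                 * blk_up r ur (ur * omega r * diagm r a' * u)) \<noteq> 0"
  shows "(\<forall>i<r. a i / a (Suc i) \<in> {1 + x | x. x \<in> pideal v (int m)}) \<and>
         blk_up r (1\<^sub>m r) (omega r * diagm r a' * u) \<in> Jgrp v unif_w n m \<and>
         W (blk_anti r (diagm (r+1) a) (diagm r b * omega r)
              * blk_up r ur (ur * omega r * diagm r a' * u))
         = W (blk_anti r (diagm (r+1) a) (diagm r b * omega r) * blk_up r ur (0\<^sub>m r r))"
proof -
  interpret howe_vector v unif_w \<psi> n m V W
    using F unif psi pi(1) howe by unfold_locales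
  define Y where "Y = omega r * diagm r a' * u"
  have urc: "ur \<in> carrier_mat r r" and uc: "u \<in> carrier_mat r r"
    and om: "omega r * diagm r a' \<in> carrier_mat r r"
    using ur u by (auto simp: upper_uni_def omega_def)
  then have Y: "Y \<in> carrier_mat r r" unfolding Y_def by simp
  have "ur * omega r * diagm r a' * u = ur * Y"
    using assoc_mult_mat[OF urc _ diagm_carrier, of "omega r" r a'] assoc_mult_mat[OF urc om uc]
    by (simp add: Y_def omega_def)
  then have g: "blk_anti r (diagm (r+1) a) (diagm r b * omega r) * blk_up r ur (ur * omega r * diagm r a' * u)
      = gelt r a b ur Y"
    by (simp add: gelt_def antidiag_torus_def)
  have W_cleared: "W (gelt r a b ur (zero_first_cols j Y)) = W (gelt r a b ur Y)" if "j \<le> r" for j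
    using W_gelt_zero_first_cols[OF n a urc Y _ that] nz g by simp
  then have nz_cleared: "W (gelt r a b ur (zero_first_cols j Y)) \<noteq> 0" if "j < r" for j
    using that nz g by simp
  have "\<forall>i<r. a i / a (Suc i) \<in> {1 + x | x. x \<in> pideal v (int m)}"
    using gelt_ratio_principal_unit[OF n a urc Y _ nz_cleared] by blast
  moreover have "blk_up r (1\<^sub>m r) Y \<in> Jgrp v unif_w n m"
    unfolding n using gelt_column_pideal[OF n a urc Y _ nz_cleared]
    by (intro blk_up_one_Jgrp[OF F unif]) blast
  moreover have "W (gelt r a b ur Y) = W (gelt r a b ur (0\<^sub>m r r))"
    using W_cleared[of r] zero_first_cols_all[OF Y] by simp
  ultimately show ?thesis using g gelt_zero[OF urc] by (simp add: Y_def)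
qed

end
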